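(* For the alternate network mining strategy, Phase 1 lasts on average $n_0\tau_0\delta$ and Phase 2 lasts on average $n_0\tau_0/\delta$. The attacker's revenue ratio is $\rho$ during Phase 1 and $\rho\delta$ during Phase 2. Consequently, the revenue ratio of the alternate network mining strategy is $$\frac{1+\delta}{\delta+\frac1\delta}\,\rho.$$
   Context: Alternate network mining (ANM) model. Two networks (e.g. BTC and BCH) use the same proof-of-work algorithm, and switching between them is frictionless. There are three types of miners: those mining only on BTC, those mining only on BCH, and an "attacker" who alternates. All miners mine at full power, and the total hash power is constant. Honest mining yields the same revenue ratio $\rho$ for the attacker on both networks. The BTC difficulty is adjusted every $n_0$ BTC blocks, so that blocks arrive every $\tau_0$ on average at the hash power observed during the previous period. The attacker starts at a BTC difficulty adjustment, with difficulty calibrated for the full hash power including his own. An attack cycle has two phases. In Phase 1, the attacker mines honestly on BCH until $n_0$ blocks are mined on BTC. In Phase 2, he mines honestly on BTC until the next BTC difficulty adjustment. $\delta>1$ denotes the difficulty adjustment parameter after Phase 1, i.e. the ratio of the mean duration of Phase 1 to $n_0\tau_0$. The difficulty is divided by $\delta$ at the end of Phase 1, and the adjustment at the end of Phase 2 has parameter $1/\delta$. The revenue ratio of the strategy is (mean revenue per cycle)/(mean cycle duration). *)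

theory Defs
  imports Complex_Main
begin

text \<open>Mean-value model of alternate network mining (ANM).
  Hash powers: hB = miners only on BTC, hA = attacker. A difficulty D is measured
  so that, with hash power h on the network, the mean time between blocks is D / h
  (blocks form a Poisson process; n blocks take on average n times the mean block time).\<close>

definition mean_block_time :: "real \<Rightarrow> real \<Rightarrow> real" where
  "mean_block_time D h = D / h"

text \<open>Initial BTC difficulty: calibrated so that blocks arrive every tau0 on average
  at the full BTC hash power hB + hA (attacker included).\<close>
definition btc_D0 :: "real \<Rightarrow> real \<Rightarrow> real \<Rightarrow> real" where
  "btc_D0 tau0 hB hA = tau0 * (hB + hA)"

text \<open>Attacker's revenue per unit time when mining honestly with hash power hA on a
  network with difficulty D and block reward b: blocks come at rate h/D, of which a
  fraction hA/h is his, so the rate is hA*b/D.\<close>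
definition revenue_rate :: "real \<Rightarrow> real \<Rightarrow> real \<Rightarrow> real" where
  "revenue_rate hA b D = hA * b / D"

text \<open>Phase 1: attacker on BCH; n0 BTC blocks mined by hB alone at difficulty D0.\<close>
definition phase1_dur :: "nat \<Rightarrow> real \<Rightarrow> real \<Rightarrow> real \<Rightarrow> real" where
  "phase1_dur n0 tau0 hB hA = real n0 * mean_block_time (btc_D0 tau0 hB hA) hB"

definition anm_delta :: "nat \<Rightarrow> real \<Rightarrow> real \<Rightarrow> real \<Rightarrow> real" where
  "anm_delta n0 tau0 hB hA = phase1_dur n0 tau0 hB hA / (real n0 * tau0)"

definition phase2_difficulty :: "nat \<Rightarrow> real \<Rightarrow> real \<Rightarrow> real \<Rightarrow> real" where
  "phase2_difficulty n0 tau0 hB hA = btc_D0 tau0 hB hA / anm_delta n0 tau0 hB hA"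

text \<open>Phase 2: attacker back on BTC; n0 BTC blocks mined by hB + hA.\<close>
definition phase2_dur :: "nat \<Rightarrow> real \<Rightarrow> real \<Rightarrow> real \<Rightarrow> real" where
  "phase2_dur n0 tau0 hB hA =
     real n0 * mean_block_time (phase2_difficulty n0 tau0 hB hA) (hB + hA)"

text \<open>Revenue ratio in Phase 1 (honest mining on BCH, difficulty DC, reward bC) and
  in Phase 2 (honest mining on BTC at the lowered difficulty, reward bB).\<close>
definition phase1_rate :: "real \<Rightarrow> real \<Rightarrow> real \<Rightarrow> real" where
  "phase1_rate hA bC DC = revenue_rate hA bC DC"

definition phase2_rate :: "nat \<Rightarrow> real \<Rightarrow> real \<Rightarrow> real \<Rightarrow> real \<Rightarrow> real" where
  "phase2_rate n0 tau0 hB hA bB = revenue_rate hA bB (phase2_difficulty n0 tau0 hB hA)"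

definition anm_revenue_ratio ::
  "nat \<Rightarrow> real \<Rightarrow> real \<Rightarrow> real \<Rightarrow> real \<Rightarrow> real \<Rightarrow> real \<Rightarrow> real" where
  "anm_revenue_ratio n0 tau0 hB hA bB bC DC =
     (phase1_rate hA bC DC * phase1_dur n0 tau0 hB hA
      + phase2_rate n0 tau0 hB hA bB * phase2_dur n0 tau0 hB hA)
     / (phase1_dur n0 tau0 hB hA + phase2_dur n0 tau0 hB hA)"

end

theory Submission
  imports Defs
begin

text \<open>Without the attacker, BTC blocks arrive at rate hB instead of hB + hA, so Phase 1
  is stretched by \<delta> = (hB + hA) / hB. Dividing the difficulty by \<delta> brings it down to
  \<tau>0 hB, which the full hash power hB + hA works through \<delta> times faster than normal;
  the attacker's BTC revenue ratio is multiplied by the same \<delta>. Weighting the ratios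
  \<rho> and \<rho>\<delta> by the durations n0\<tau>0\<delta> and n0\<tau>0/\<delta> gives the average.\<close>

lemma anm_delta_eq:
  assumes "n0 > 0" and "tau0 > 0" and "hB > 0"
  shows "anm_delta n0 tau0 hB hA = (hB + hA) / hB"
  using assms
  by (simp add: anm_delta_def phase1_dur_def mean_block_time_def btc_D0_def field_simps)

lemma phase1_dur_eq:
  assumes "n0 > 0" and "tau0 > 0" and "hB > 0"
  shows "phase1_dur n0 tau0 hB hA = real n0 * tau0 * anm_delta n0 tau0 hB hA"
  using assms
  by (simp add: anm_delta_eq phase1_dur_def mean_block_time_def btc_D0_def)

lemma phase2_difficulty_eq:
  assumes "n0 > 0" and "tau0 > 0" and "hB > 0" and "hA > 0"
  shows "phase2_difficulty n0 tau0 hB hA = tau0 * hB"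
  using assms by (simp add: phase2_difficulty_def anm_delta_eq btc_D0_def)

lemma phase2_dur_eq:
  assumes "n0 > 0" and "tau0 > 0" and "hB > 0" and "hA > 0"
  shows "phase2_dur n0 tau0 hB hA = real n0 * tau0 / anm_delta n0 tau0 hB hA"
  using assms
  by (simp add: phase2_dur_def phase2_difficulty_eq anm_delta_eq mean_block_time_def)

lemma phase2_rate_eq:
  assumes "n0 > 0" and "tau0 > 0" and "hB > 0" and "hA > 0"
  shows "phase2_rate n0 tau0 hB hA bB
           = revenue_rate hA bB (btc_D0 tau0 hB hA) * anm_delta n0 tau0 hB hA"
  using assms
  by (simp add: phase2_rate_def phase2_difficulty_eq anm_delta_eq revenue_rate_def btc_D0_def)

lemma weighted_rate_two_phases:
  fixes c d \<rho> :: real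
  assumes "c > 0" and "d > 0"
  shows "(\<rho> * (c * d) + \<rho> * d * (c / d)) / (c * d + c / d) = (1 + d) / (d + 1 / d) * \<rho>"
proof -
  have "(\<rho> * (c * d) + \<rho> * d * (c / d)) / (c * d + c / d)
          = (c * (\<rho> * (1 + d))) / (c * (d + 1 / d))"
    using assms by (simp add: algebra_simps)
  also have "\<dots> = (1 + d) / (d + 1 / d) * \<rho>"
    using assms by simp
  finally show ?thesis .
qed

theorem mainTheorem11:
  fixes n0 :: nat and tau0 hB hA bB bC DC \<rho> :: real
  assumes "n0 > 0" and "tau0 > 0" and "hB > 0" and "hA > 0"
    and "bB > 0" and "bC > 0" and "DC > 0"
    and "\<rho> = revenue_rate hA bB (btc_D0 tau0 hB hA)"
    and "\<rho> = revenue_rate hA bC DC"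
  shows "phase1_dur n0 tau0 hB hA = real n0 * tau0 * anm_delta n0 tau0 hB hA
    \<and> phase2_dur n0 tau0 hB hA = real n0 * tau0 / anm_delta n0 tau0 hB hA
    \<and> phase1_rate hA bC DC = \<rho>
    \<and> phase2_rate n0 tau0 hB hA bB = \<rho> * anm_delta n0 tau0 hB hA
    \<and> anm_revenue_ratio n0 tau0 hB hA bB bC DC =
        (1 + anm_delta n0 tau0 hB hA)
        / (anm_delta n0 tau0 hB hA + 1 / anm_delta n0 tau0 hB hA) * \<rho>"
proof -
  note dur1 = phase1_dur_eq[OF assms(1-3)]
  note dur2 = phase2_dur_eq[OF assms(1-4)]
  have rate1: "phase1_rate hA bC DC = \<rho>"
    using assms(9) by (simp add: phase1_rate_def)
  have rate2: "phase2_rate n0 tau0 hB hA bB = \<rho> * anm_delta n0 tau0 hB hA"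
    using phase2_rate_eq[OF assms(1-4)] assms(8) by simp
  have "real n0 * tau0 > 0"
    using assms(1,2) by simp
  moreover have "anm_delta n0 tau0 hB hA > 0"
    using assms(1-4) by (simp add: anm_delta_eq)
  ultimately have "anm_revenue_ratio n0 tau0 hB hA bB bC DC =
      (1 + anm_delta n0 tau0 hB hA) / (anm_delta n0 tau0 hB hA + 1 / anm_delta n0 tau0 hB hA) * \<rho>"
    unfolding anm_revenue_ratio_def dur1 dur2 rate1 rate2
    by (rule weighted_rate_two_phases)
  with dur1 dur2 rate1 rate2 show ?thesis by simp
qed

end
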